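(* Let $C>1$ and let $P$ be a probability measure on $[0,\infty)$ with mean $\mu_P\in[0,\infty]$. Then: (1) $G_{P,C}$ is continuous and concave on $[0,\infty)$; (2) $\sup_{\mu\ge0}G_{P,C}(\mu)=G_{P,C}\big(\tfrac1C m_{P}\big)$; (3) $\tfrac1C m_P\le\mu_{P,C}\le\mu_P$.
   Context: For $\mu\ge0$ define $G_{P,C}(\mu):=\mathbb{E}_{t\sim P}[\min\{t,C\mu\}]-\mu$. The $C$-clipped mean $\mu_{P,C}$ is the largest $\mu\ge0$ with $G_{P,C}(\mu)=0$ (note $G_{P,C}(0)=0$). The $\frac1C$-median is $m_P:=\sup\{M\ge0:\mathbb{P}_{t\sim P}[t\ge M]\ge\frac1C\}$ (so $\mathbb{P}_{t\sim P}[t\ge m_P]\ge\frac1C$). *)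

theory Defs
  imports "HOL-Probability.Probability"
begin

definition clipG :: "real measure \<Rightarrow> real \<Rightarrow> real \<Rightarrow> real" where
  "clipG P C \<mu> = (\<integral>t. min t (C * \<mu>) \<partial>P) - \<mu>"

definition clipped_mean :: "real measure \<Rightarrow> real \<Rightarrow> real" where
  "clipped_mean P C = (GREATEST \<mu>. \<mu> \<ge> 0 \<and> clipG P C \<mu> = 0)"

definition inv_C_median :: "real measure \<Rightarrow> real \<Rightarrow> real" where
  "inv_C_median P C = Sup {M. M \<ge> 0 \<and> measure P {t \<in> space P. t \<ge> M} \<ge> 1 / C}"

definition mean_ennreal :: "real measure \<Rightarrow> ennreal" where
  "mean_ennreal P = (\<integral>\<^sup>+ t. ennreal t \<partial>P)"

end

theory Submission
  imports Defs
begin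

text \<open>
  The integrand \<open>\<mu> \<mapsto> min t (C\<mu>) - \<mu>\<close> is concave and \<open>(C + 1)\<close>-Lipschitz for every \<open>t\<close>,
  and so is its integral \<open>G\<close>. Comparing \<open>min t (C\<mu>)\<close> with \<open>min t m\<close> pointwise, the
  error is carried by \<open>{t > m}\<close> when \<open>C\<mu> \<ge> m\<close> and by \<open>{t \<ge> m}\<close> when \<open>C\<mu> \<le> m\<close>; since these
  sets have probability at most resp. at least \<open>1/C\<close>, \<open>G\<close> is maximal at \<open>m/C\<close>.
  As \<open>G(0) = 0\<close>, \<open>G(m/C) \<ge> 0\<close>, and the tail bound \<open>P[t \<ge> K] < 1/C\<close> makes \<open>G\<close> decrease at
  least linearly, the zero set of \<open>G\<close> is closed, bounded, and meets \<open>[m/C, \<infinity>)\<close>.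
  Finally \<open>G(\<mu>) = 0\<close> means \<open>\<mu> = E[min t (C\<mu>)] \<le> E[t]\<close>.
\<close>

context real_distribution
begin

lemma prob_UNIV [simp]: "prob UNIV = 1"
  using prob_space by simp

lemma tendsto_prob_atLeast_at_top: "((\<lambda>K. prob {K..}) \<longlongrightarrow> 0) at_top"
proof (rule tendsto_sandwich)
  show "\<forall>\<^sub>F K in at_top. 0 \<le> prob {K..}" by simp
  show "\<forall>\<^sub>F K in at_top. prob {K..} \<le> 1 - cdf M (K - 1)"
  proof (intro always_eventually allI)
    fix K :: real
    have "prob {K..} \<le> prob {K - 1<..}" by (rule finite_measure_mono) auto
    also have "\<dots> = 1 - cdf M (K - 1)"
      using prob_compl[of "{..K - 1}"] by (simp add: cdf_def Compl_eq_Diff_UNIV[symmetric])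
    finally show "prob {K..} \<le> 1 - cdf M (K - 1)" .
  qed
  have "filterlim (\<lambda>K::real. K - 1) at_top at_top"
    using filterlim_tendsto_add_at_top[OF tendsto_const[of "-1"] filterlim_ident] by simp
  then have "((\<lambda>K. cdf M (K - 1)) \<longlongrightarrow> 1) at_top"
    by (rule filterlim_compose[OF cdf_lim_at_top_prob])
  then show "((\<lambda>K. 1 - cdf M (K - 1)) \<longlongrightarrow> 0) at_top"
    using tendsto_diff[OF tendsto_const[of 1]] by fastforce
qed simp

lemma prob_atLeast_ge_if_left:
  assumes "\<And>M. M < a \<Longrightarrow> q \<le> prob {M..}"
  shows "q \<le> prob {a..}"
proof -
  have "cdf M x \<le> 1 - q" if "x < a" for x
  proof -
    have "cdf M x \<le> prob {..<(x + a) / 2}"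
      unfolding cdf_def using that by (intro finite_measure_mono) auto
    also have "\<dots> = 1 - prob {(x + a) / 2..}"
      using prob_compl[of "{(x + a) / 2..}"] by (simp add: Compl_eq_Diff_UNIV[symmetric])
    also have "\<dots> \<le> 1 - q" using assms[of "(x + a) / 2"] that by simp
    finally show ?thesis .
  qed
  then have "prob {..<a} \<le> 1 - q"
    by (intro tendsto_upperbound[OF cdf_at_left]) (auto simp: eventually_at_left_field intro: exI[of _ "a - 1"])
  moreover have "prob {a..} = 1 - prob {..<a}"
    using prob_compl[of "{..<a}"] by (simp add: Compl_eq_Diff_UNIV[symmetric])
  ultimately show ?thesis by simp
qed

lemma prob_greaterThan_le_if_right:
  assumes "\<And>M. a < M \<Longrightarrow> prob {M<..} \<le> q"
  shows "prob {a<..} \<le> q"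
proof -
  have tail_eq: "prob {x<..} = 1 - cdf M x" for x
    using prob_compl[of "{..x}"] by (simp add: cdf_def Compl_eq_Diff_UNIV[symmetric])
  moreover have "1 - q \<le> cdf M a"
  proof (rule tendsto_lowerbound)
    show "(cdf M \<longlongrightarrow> cdf M a) (at_right a)"
      using cdf_is_right_cont by (simp add: continuous_within)
    show "\<forall>\<^sub>F x in at_right a. 1 - q \<le> cdf M x"
      using assms tail_eq by (force simp: eventually_at_right_field intro: exI[of _ "a + 1"])
  qed simp
  ultimately show ?thesis by simp
qed

end

locale nonneg_real_distribution = real_distribution P for P :: "real measure" +
  assumes AE_nonneg: "AE t in P. 0 \<le> t"
begin

lemma integrable_min_const [simp, intro]: "integrable P (\<lambda>t. min t a)"
proof (rule integrable_const_bound[where B = "\<bar>a\<bar>"])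
  show "AE t in P. norm (min t a) \<le> \<bar>a\<bar>"
    using AE_nonneg by eventually_elim auto
qed measurable

lemma integrable_min_add_indicator:
  "A \<in> sets borel \<Longrightarrow> integrable P (\<lambda>t. min t a + c * indicator A t)"
  by (auto simp: less_top[symmetric])

lemma integral_min_add_indicator:
  "A \<in> sets borel \<Longrightarrow> (\<integral>t. min t a + c * indicator A t \<partial>P) = (\<integral>t. min t a \<partial>P) + c * prob A"
  by (subst Bochner_Integration.integral_add) (auto simp: less_top[symmetric])

lemma clipG_0 [simp]: "clipG P C 0 = 0"
proof -
  have "(\<integral>t. min t 0 \<partial>P) = (\<integral>t. 0 \<partial>P)"
    by (rule integral_cong_AE) (use AE_nonneg in auto)
  then show ?thesis by (simp add: clipG_def)
qed

lemma clipG_le_add_abs: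
  assumes "0 \<le> C"
  shows "clipG P C x \<le> clipG P C y + (C + 1) * \<bar>x - y\<bar>"
proof -
  have "(\<integral>t. min t (C * x) \<partial>P) \<le> (\<integral>t. min t (C * y) + C * \<bar>x - y\<bar> \<partial>P)"
  proof (rule integral_mono)
    have "C * x \<le> C * y + C * \<bar>x - y\<bar>" "0 \<le> C * \<bar>x - y\<bar>"
      using assms by (simp_all add: abs_if distrib_left[symmetric] mult_left_mono)
    then show "min t (C * x) \<le> min t (C * y) + C * \<bar>x - y\<bar>" for t
      unfolding min_def by argo
  qed auto
  also have "\<dots> = (\<integral>t. min t (C * y) \<partial>P) + C * \<bar>x - y\<bar>"
    by (subst Bochner_Integration.integral_add) auto
  finally show ?thesis
    unfolding clipG_def by (auto simp: algebra_simps abs_if)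
qed

lemma lipschitz_on_clipG: "0 \<le> C \<Longrightarrow> (C + 1)-lipschitz_on S (clipG P C)"
  using clipG_le_add_abs[of C] unfolding lipschitz_on_def dist_real_def
  by (smt (verit) abs_minus_commute)

lemma continuous_on_clipG: "0 \<le> C \<Longrightarrow> continuous_on S (clipG P C)"
  by (rule lipschitz_on_continuous_on[OF lipschitz_on_clipG])

lemma concave_on_clipG:
  assumes "convex S"
  shows "concave_on S (clipG P C)"
  unfolding concave_on_iff
proof (intro conjI assms ballI allI impI)
  fix x y u v :: real assume uv: "0 \<le> u" "0 \<le> v" "u + v = 1"
  have "(\<integral>t. u * min t (C * x) + v * min t (C * y) \<partial>P) \<le> (\<integral>t. min t (C * (u * x + v * y)) \<partial>P)"
  proof (rule integral_mono)
    fix t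
    have "u * min t (C * x) \<le> u * t" "v * min t (C * y) \<le> v * t"
      "u * min t (C * x) \<le> u * (C * x)" "v * min t (C * y) \<le> v * (C * y)"
      using uv by (auto intro: mult_left_mono)
    then have "u * min t (C * x) + v * min t (C * y) \<le> (u + v) * t"
      "u * min t (C * x) + v * min t (C * y) \<le> C * (u * x + v * y)"
      by (simp_all add: algebra_simps)
    then show "u * min t (C * x) + v * min t (C * y) \<le> min t (C * (u * x + v * y))"
      using uv by simp
  qed auto
  also have "(\<integral>t. u * min t (C * x) + v * min t (C * y) \<partial>P)
      = u * (\<integral>t. min t (C * x) \<partial>P) + v * (\<integral>t. min t (C * y) \<partial>P)"
    by (subst Bochner_Integration.integral_add) auto
  finally show "u * clipG P C x + v * clipG P C y \<le> clipG P C (u *\<^sub>R x + v *\<^sub>R y)"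
    unfolding clipG_def using uv by (simp add: algebra_simps)
qed

lemma le_mean_if_clipG_eq_0:
  assumes "0 \<le> C" "0 \<le> \<mu>" "clipG P C \<mu> = 0"
  shows "ennreal \<mu> \<le> mean_ennreal P"
proof -
  have "ennreal \<mu> = ennreal (\<integral>t. min t (C * \<mu>) \<partial>P)"
    using assms(3) by (simp add: clipG_def)
  also have "\<dots> = (\<integral>\<^sup>+ t. ennreal (min t (C * \<mu>)) \<partial>P)"
    using AE_nonneg assms(1,2) by (intro nn_integral_eq_integral[symmetric]) (auto elim!: AE_mp)
  also have "\<dots> \<le> (\<integral>\<^sup>+ t. ennreal t \<partial>P)"
    by (intro nn_integral_mono ennreal_leI) simp
  finally show ?thesis
    by (simp add: mean_ennreal_def)
qed

end

locale clipped_mean_setting = nonneg_real_distribution +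
  fixes C :: real
  assumes one_le_C: "1 \<le> C"
begin

abbreviation median :: real where
  "median \<equiv> inv_C_median P C"

lemma C_pos: "0 < C"
  using one_le_C by simp

lemma median_eq_Sup: "median = Sup {M. 0 \<le> M \<and> 1 / C \<le> prob {M..}}"
  by (simp add: inv_C_median_def atLeast_def)

lemma zero_in_median_set: "0 \<in> {M. 0 \<le> M \<and> 1 / C \<le> prob {M..}}"
proof -
  have "prob {0..} = 1"
    using prob_Collect_eq_1[of "\<lambda>t. 0 \<le> t"] AE_nonneg by (simp add: atLeast_def)
  then show ?thesis
    using one_le_C by simp
qed

lemma tail_below_inv_C: obtains K where "0 \<le> K" "prob {K..} < 1 / C"
proof -
  have "\<forall>\<^sub>F K in at_top. prob {K..} < 1 / C"
    using C_pos by (intro order_tendstoD(2)[OF tendsto_prob_atLeast_at_top]) simp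
  then have "\<forall>\<^sub>F K in at_top. 0 \<le> K \<and> prob {K..} < 1 / C"
    by (intro eventually_conj eventually_ge_at_top)
  then show ?thesis
    using that by (auto simp: eventually_at_top_linorder)
qed

lemma bdd_above_median_set: "bdd_above {M. 0 \<le> M \<and> 1 / C \<le> prob {M..}}"
proof -
  obtain K where K: "prob {K..} < 1 / C"
    using tail_below_inv_C by blast
  have "M \<le> K" if "1 / C \<le> prob {M..}" for M
  proof (rule ccontr)
    assume "\<not> M \<le> K"
    then have "prob {M..} \<le> prob {K..}"
      by (intro finite_measure_mono) auto
    with K that show False by simp
  qed
  then show ?thesis
    by (auto simp: bdd_above_def)
qed

lemma median_nonneg: "0 \<le> median"
  unfolding median_eq_Sup using zero_in_median_set bdd_above_median_set by (rule cSup_upper)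

lemma prob_atLeast_median: "1 / C \<le> prob {median..}"
proof (rule prob_atLeast_ge_if_left)
  fix M assume "M < median"
  then obtain M' where M': "M < M'" "1 / C \<le> prob {M'..}"
    using less_cSup_iff[OF _ bdd_above_median_set] zero_in_median_set
    unfolding median_eq_Sup by blast
  have "prob {M'..} \<le> prob {M..}"
    using M' by (intro finite_measure_mono) auto
  with M' show "1 / C \<le> prob {M..}" by simp
qed

lemma prob_greaterThan_median: "prob {median<..} \<le> 1 / C"
proof (rule prob_greaterThan_le_if_right)
  fix M assume "median < M"
  then have "\<not> 1 / C \<le> prob {M..}"
    using cSup_upper[OF _ bdd_above_median_set, of M] median_nonneg
    unfolding median_eq_Sup by force
  moreover have "prob {M<..} \<le> prob {M..}"
    by (intro finite_measure_mono) auto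
  ultimately show "prob {M<..} \<le> 1 / C" by simp
qed

lemma clipG_le_clipG_median: "clipG P C \<mu> \<le> clipG P C (median / C)"
proof (cases "median \<le> C * \<mu>")
  case True
  have "(\<integral>t. min t (C * \<mu>) \<partial>P) \<le> (\<integral>t. min t median + (C * \<mu> - median) * indicator {median<..} t \<partial>P)"
    using True by (intro integral_mono integrable_min_add_indicator) (auto simp: indicator_def)
  also have "\<dots> = (\<integral>t. min t median \<partial>P) + (C * \<mu> - median) * prob {median<..}"
    by (rule integral_min_add_indicator) simp
  also have "\<dots> \<le> (\<integral>t. min t median \<partial>P) + (C * \<mu> - median) * (1 / C)"
    using True prob_greaterThan_median by (intro add_left_mono mult_left_mono) auto
  also have "(C * \<mu> - median) * (1 / C) = \<mu> - median / C"
    using C_pos by (simp add: field_simps)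
  finally show ?thesis
    using C_pos by (simp add: clipG_def)
next
  case False
  have "(\<integral>t. min t (C * \<mu>) \<partial>P) + (median - C * \<mu>) * (1 / C)
      \<le> (\<integral>t. min t (C * \<mu>) \<partial>P) + (median - C * \<mu>) * prob {median..}"
    using False prob_atLeast_median by (intro add_left_mono mult_left_mono) auto
  also have "\<dots> = (\<integral>t. min t (C * \<mu>) + (median - C * \<mu>) * indicator {median..} t \<partial>P)"
    by (rule integral_min_add_indicator[symmetric]) simp
  also have "\<dots> \<le> (\<integral>t. min t median \<partial>P)"
    using False by (intro integral_mono integrable_min_add_indicator) (auto simp: indicator_def)
  also have "(median - C * \<mu>) * (1 / C) = median / C - \<mu>"
    using C_pos by (simp add: field_simps)
  finally show ?thesis
    using C_pos by (simp add: clipG_def)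
qed

lemma SUP_clipG: "(SUP \<mu>\<in>{0..}. clipG P C \<mu>) = clipG P C (median / C)"
  by (rule cSup_eq_maximum) (use median_nonneg C_pos clipG_le_clipG_median in auto)

lemma clipG_le_linear:
  obtains K c where "0 < c" "\<And>\<mu>. 0 \<le> \<mu> \<Longrightarrow> clipG P C \<mu> \<le> K - c * \<mu>"
proof -
  obtain K where K: "0 \<le> K" "prob {K..} < 1 / C"
    using tail_below_inv_C by blast
  have "clipG P C \<mu> \<le> K - (1 - C * prob {K..}) * \<mu>" if "0 \<le> \<mu>" for \<mu>
  proof -
    have "(\<integral>t. min t (C * \<mu>) \<partial>P) \<le> (\<integral>t. min t K + C * \<mu> * indicator {K..} t \<partial>P)"
      using that K(1) C_pos by (intro integral_mono integrable_min_add_indicator) (auto simp: indicator_def)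
    also have "\<dots> = (\<integral>t. min t K \<partial>P) + C * \<mu> * prob {K..}"
      by (rule integral_min_add_indicator) simp
    moreover have "(\<integral>t. min t K \<partial>P) \<le> (\<integral>t. K \<partial>P)"
      by (intro integral_mono) auto
    ultimately show ?thesis
      by (simp add: clipG_def algebra_simps)
  qed
  moreover have "0 < 1 - C * prob {K..}"
    using K(2) C_pos by (simp add: field_simps)
  ultimately show ?thesis
    using that by blast
qed

lemma clipG_zero_set_bounded: "bdd_above {\<mu>. 0 \<le> \<mu> \<and> clipG P C \<mu> = 0}"
proof -
  obtain K c where c: "0 < c" and G: "\<And>\<mu>. 0 \<le> \<mu> \<Longrightarrow> clipG P C \<mu> \<le> K - c * \<mu>"
    using clipG_le_linear by blast
  have "\<mu> \<le> K / c" if "0 \<le> \<mu>" "clipG P C \<mu> = 0" for \<mu>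
    using G[OF that(1)] that(2) c by (simp add: field_simps)
  then show ?thesis
    by (auto simp: bdd_above_def)
qed

lemma clipG_has_zero_above_median: obtains \<mu> where "median / C \<le> \<mu>" "clipG P C \<mu> = 0"
proof -
  obtain K c where c: "0 < c" and G: "\<And>\<mu>. 0 \<le> \<mu> \<Longrightarrow> clipG P C \<mu> \<le> K - c * \<mu>"
    using clipG_le_linear by blast
  define \<mu>\<^sub>1 where "\<mu>\<^sub>1 = max (median / C) (K / c)"
  have "0 \<le> median / C"
    using median_nonneg C_pos by simp
  then have "clipG P C \<mu>\<^sub>1 \<le> K - c * \<mu>\<^sub>1"
    by (intro G) (simp add: \<mu>\<^sub>1_def)
  moreover have "K \<le> c * \<mu>\<^sub>1"
    using c mult_left_mono[OF max.cobounded2[of "K / c" "median / C"], of c]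
    by (simp add: \<mu>\<^sub>1_def)
  ultimately have "clipG P C \<mu>\<^sub>1 \<le> 0"
    by simp
  moreover have "0 \<le> clipG P C (median / C)"
    using clipG_le_clipG_median[of 0] by simp
  ultimately show ?thesis
    using IVT2'[OF _ _ _ continuous_on_clipG] C_pos that by (force simp: \<mu>\<^sub>1_def)
qed

lemma clipped_mean_is_greatest_zero:
  "0 \<le> clipped_mean P C" "clipG P C (clipped_mean P C) = 0"
  "0 \<le> \<mu> \<Longrightarrow> clipG P C \<mu> = 0 \<Longrightarrow> \<mu> \<le> clipped_mean P C"
proof -
  define Z where "Z = {\<mu>. 0 \<le> \<mu> \<and> clipG P C \<mu> = 0}"
  have "closed Z"
    unfolding Z_def using continuous_on_clipG[of C UNIV] C_pos
    by (intro closed_Collect_conj closed_Collect_le closed_Collect_eq)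
       (auto simp: continuous_on_eq_continuous_within)
  have "0 \<in> Z" and bdd: "bdd_above Z"
    using clipG_zero_set_bounded by (simp_all add: Z_def)
  then have "Sup Z \<in> Z"
    using closed_contains_Sup[OF _ bdd \<open>closed Z\<close>] by blast
  have upper: "\<mu> \<le> Sup Z" if "\<mu> \<in> Z" for \<mu>
    using that bdd by (rule cSup_upper)
  have "clipped_mean P C = Sup Z"
    unfolding clipped_mean_def
  proof (rule Greatest_equality)
    show "0 \<le> Sup Z \<and> clipG P C (Sup Z) = 0"
      using \<open>Sup Z \<in> Z\<close> by (simp add: Z_def)
  qed (rule upper, simp add: Z_def)
  with \<open>Sup Z \<in> Z\<close> upper show "0 \<le> clipped_mean P C" "clipG P C (clipped_mean P C) = 0"
    "0 \<le> \<mu> \<Longrightarrow> clipG P C \<mu> = 0 \<Longrightarrow> \<mu> \<le> clipped_mean P C"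
    by (simp_all add: Z_def)
qed

lemma median_div_le_clipped_mean: "median / C \<le> clipped_mean P C"
proof -
  obtain \<mu> where "median / C \<le> \<mu>" "clipG P C \<mu> = 0"
    using clipG_has_zero_above_median .
  moreover have "0 \<le> median / C"
    using median_nonneg C_pos by simp
  ultimately show ?thesis
    using clipped_mean_is_greatest_zero(3)[of \<mu>] by simp
qed

end

theorem mainTheorem15:
  fixes P :: "real measure" and C :: real
  assumes "C > 1"
    and "prob_space P"
    and "sets P = sets borel"
    and "AE t in P. t \<ge> 0"
  shows "continuous_on {0..} (clipG P C) \<and> concave_on {0..} (clipG P C)
    \<and> (SUP \<mu>\<in>{0..}. clipG P C \<mu>) = clipG P C (inv_C_median P C / C)
    \<and> inv_C_median P C / C \<le> clipped_mean P C
    \<and> ennreal (clipped_mean P C) \<le> mean_ennreal P"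
proof -
  have "real_distribution P"
    using assms(2,3) by (simp add: real_distribution_def real_distribution_axioms_def)
  then interpret clipped_mean_setting P C
    using assms(1,4) by (simp add: clipped_mean_setting_def clipped_mean_setting_axioms_def
        nonneg_real_distribution_def nonneg_real_distribution_axioms_def)
  have "0 \<le> C"
    using C_pos by simp
  then show ?thesis
    using continuous_on_clipG concave_on_clipG[of "{0..}" C] SUP_clipG
      median_div_le_clipped_mean clipped_mean_is_greatest_zero(1,2)
      le_mean_if_clipG_eq_0[of C "clipped_mean P C"]
    by simp
qed

end
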